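(* Let $x_0,\dots,x_n$ be terminal states with finite scalar objective values satisfying $u(x_i)\le u(x_j)$ for all $0\le i<j\le n$. Define $$I_1:=\{i: u(x_i)<u(x_{i+1}),\ 0\le i\le n-1\},\qquad I_2:=\{i: u(x_i)=u(x_{i+1}),\ 0\le i\le n-1\},$$ and $m:=|I_1|$. Introduce two auxiliary states $x_{-1},x_{n+1}$ with $u(x_{-1})=-\infty$ and $u(x_{n+1})=+\infty$. For $\gamma\ge1$ and $r:\{x_{-1},\dots,x_{n+1}\}\to[1/\gamma,1]$, define $$\mathcal{L}_{\rm OP-N}(r):=\sum_{i=0}^{n+1}\mathcal{L}_{\rm OP}(\{x_{i-1},x_i\};r),$$ and let $\widehat R$ be its minimizer over all such $r$. Let $f_1(\alpha):=\alpha^{m+2}\left(1-\frac{4}{\alpha+3}\right)^{n-m}$. The functions $\alpha\mapsto f_1(\alpha)$ and $\gamma\mapsto \gamma^{-1}f_1(\gamma^{1/(m+1)})$ are increasing on $[1,\infty)$ and tend to $+\infty$; let $\gamma_0\ge 1$ be the unique value with $f_1(\gamma_0^{1/(m+1)})=\gamma_0$, and for $\gamma>\gamma_0$ let $\alpha_\gamma>1$ be the unique solution of $f_1(\alpha_\gamma)=\gamma$, and put $\beta_\gamma:=\frac{\alpha_\gamma-1}{\alpha_\gamma+3}$. Then for every $\gamma>\gamma_0$: $$\widehat R(x_0)=\alpha_\gamma\gamma^{-1},\qquad \widehat R(x_{i+1})=\alpha_\gamma\widehat R(x_i)\ (i\in I_1),\qquad \widehat R(x_{i+1})=\beta_\gamma\widehat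 R(x_i)\ (i\in I_2).$$ Moreover, the minimal value of $\mathcal{L}_{\rm OP-N}$ is strictly decreasing in $\gamma$, so that minimizing $\mathcal{L}_{\rm OP-N}$ with $\gamma$ variable drives $\gamma\to+\infty$, and as $\gamma\to\infty$ one has $\alpha_\gamma\to+\infty$ and $\beta_\gamma\to1$.
   Context: For a pair $X=\{x,x'\}$ of states with objective $u$ and a positive function $r$, the label distribution is $\mathbb{P}_y(x\mid X)=\tfrac12\big(\mathbf{1}[u(x)>u(x')]+\mathbf{1}[u(x)\ge u(x')]\big)$ (symmetrically for $x'$), the model distribution is $\mathbb{P}(x\mid X,r)=r(x)/(r(x)+r(x'))$, and $\mathcal{L}_{\rm OP}(X;r)=\mathrm{KL}(\mathbb{P}_y(\cdot\mid X)\,\|\,\mathbb{P}(\cdot\mid X,r))$. Thus for $u(x)<u(x')$ the loss is $-\log\frac{r(x')}{r(x)+r(x')}$, and for $u(x)=u(x')$ it equals $-\tfrac12\big(\log\frac{r(x)}{r(x)+r(x')}+\log\frac{r(x')}{r(x)+r(x')}\big)-\log 2$. *)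

theory Defs
  imports Complex_Main "HOL-Library.Extended_Real"
begin

definition ind :: "bool \<Rightarrow> real" where
  "ind b = (if b then 1 else 0)"

(* label distribution P_y(x | {x,x'}) given objective values u(x)=a, u(x')=b *)
definition label_prob :: "ereal \<Rightarrow> ereal \<Rightarrow> real" where
  "label_prob a b = (ind (a > b) + ind (a \<ge> b)) / 2"

(* model distribution P(x | {x,x'}, r) given r(x)=p, r(x')=q *)
definition model_prob :: "real \<Rightarrow> real \<Rightarrow> real" where
  "model_prob p q = p / (p + q)"

definition kl2 :: "real \<Rightarrow> real \<Rightarrow> real \<Rightarrow> real \<Rightarrow> real" where
  "kl2 p p' q q' = (if p = 0 then 0 else p * ln (p / q)) + (if p' = 0 then 0 else p' * ln (p' / q'))"

(* L_OP({x,x'}; r) with u(x)=a, u(x')=b, r(x)=p, r(x')=q *)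
definition L_OP :: "ereal \<Rightarrow> ereal \<Rightarrow> real \<Rightarrow> real \<Rightarrow> real" where
  "L_OP a b p q = kl2 (label_prob a b) (label_prob b a) (model_prob p q) (model_prob q p)"

(* states are indexed by -1..n+1; u(x_{-1}) = -\<infinity>, u(x_{n+1}) = +\<infinity> *)
definition Uext :: "nat \<Rightarrow> (nat \<Rightarrow> real) \<Rightarrow> int \<Rightarrow> ereal" where
  "Uext n u i = (if i < 0 then -\<infinity> else if i > int n then \<infinity> else ereal (u (nat i)))"

definition I1 :: "nat \<Rightarrow> (nat \<Rightarrow> real) \<Rightarrow> nat set" where
  "I1 n u = {i. i < n \<and> u i < u (Suc i)}"

definition I2 :: "nat \<Rightarrow> (nat \<Rightarrow> real) \<Rightarrow> nat set" where
  "I2 n u = {i. i < n \<and> u i = u (Suc i)}"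

definition L_OPN :: "nat \<Rightarrow> (nat \<Rightarrow> real) \<Rightarrow> (int \<Rightarrow> real) \<Rightarrow> real" where
  "L_OPN n u r = (\<Sum>i\<in>{0..int n + 1}. L_OP (Uext n u (i - 1)) (Uext n u i) (r (i - 1)) (r i))"

definition admissible :: "real \<Rightarrow> nat \<Rightarrow> (int \<Rightarrow> real) \<Rightarrow> bool" where
  "admissible \<gamma> n r = (\<forall>i\<in>{-1..int n + 1}. r i \<in> {1/\<gamma>..1})"

definition is_minimizer :: "real \<Rightarrow> nat \<Rightarrow> (nat \<Rightarrow> real) \<Rightarrow> (int \<Rightarrow> real) \<Rightarrow> bool" where
  "is_minimizer \<gamma> n u r = (admissible \<gamma> n r \<and> (\<forall>r'. admissible \<gamma> n r' \<longrightarrow> L_OPN n u r \<le> L_OPN n u r'))"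

definition Lmin :: "real \<Rightarrow> nat \<Rightarrow> (nat \<Rightarrow> real) \<Rightarrow> real" where
  "Lmin \<gamma> n u = Inf (L_OPN n u ` {r. admissible \<gamma> n r})"

definition f1 :: "nat \<Rightarrow> nat \<Rightarrow> real \<Rightarrow> real" where
  "f1 n m \<alpha> = \<alpha> ^ (m + 2) * (1 - 4 / (\<alpha> + 3)) ^ (n - m)"

definition alpha_gamma :: "nat \<Rightarrow> nat \<Rightarrow> real \<Rightarrow> real" where
  "alpha_gamma n m \<gamma> = (THE \<alpha>. \<alpha> > 1 \<and> f1 n m \<alpha> = \<gamma>)"

definition beta_of :: "real \<Rightarrow> real" where
  "beta_of \<alpha> = (\<alpha> - 1) / (\<alpha> + 3)"

end

(* Every summand of L_OPN depends only on the ratio t_j = r x_j / r x_(j-1) along edge j: it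
   is ln (1 + t) - ln t on a strict edge and ln (1 + t) - ln 2 - (ln t) / 2 on a tie, while
   admissibility forces the product of all t_j, which is r x_(n+1) / r x_(-1), to be at most
   gamma. With the Lagrange term (ln t_j) / (1 + alpha) added, each summand is uniquely minimal at
   t_j = alpha on strict edges and at t_j = beta on ties, by strict concavity of ln. The product
   of these ratios is alpha^(m+2) beta^(n-m) = f1 alpha, so alpha = alpha_gamma spends the whole
   budget, and the chain they generate from r x_(-1) = 1 / gamma stays inside [1 / gamma, 1]
   as soon as alpha beta^(n-m) > 1, which is what gamma > gamma0 amounts to. Equality in the
   Lagrangian bound forces every ratio and r x_(-1) = 1 / gamma; a larger gamma leaves the old
   minimiser admissible but no longer optimal, so the minimal loss strictly decreases. *)

theory Submission
  imports Defs "HOL-Real_Asymp.Real_Asymp"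
begin

lemma weighted_ln_less_ln_convex_comb:
  fixes w s :: real
  assumes "0 < w" "w < 1" "0 < s" "s \<noteq> 1"
  shows "w * ln s < ln (1 - w + w * s)"
proof -
  define M where "M = 1 - w + w * s"
  have M: "0 < M" "M \<noteq> 1"
    using assms by (auto simp: M_def add_pos_nonneg)
  have "ln s - ln M \<le> (s - M) / M"
    using ln_diff_le[OF \<open>0 < s\<close> \<open>0 < M\<close>] .
  moreover have "ln 1 - ln M < (1 - M) / M"
    using ln_diff_less[of 1 M] M by auto
  ultimately have "w * (ln s - ln M) + (1 - w) * (ln 1 - ln M)
      < w * ((s - M) / M) + (1 - w) * ((1 - M) / M)"
    using assms by (intro add_le_less_mono mult_left_mono mult_strict_left_mono) auto
  also have "\<dots> = 0"
    using M by (simp add: M_def field_simps)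
  finally show ?thesis
    by (simp add: M_def algebra_simps)
qed

lemma ln_one_plus_tangent_less:
  fixes a t :: real
  assumes "0 < a" "0 < t" "t \<noteq> a"
  shows "ln (1 + a) - a / (1 + a) * ln a < ln (1 + t) - a / (1 + a) * ln t"
proof -
  have "a / (1 + a) * ln (t / a) < ln (1 - a / (1 + a) + a / (1 + a) * (t / a))"
    using assms by (intro weighted_ln_less_ln_convex_comb) auto
  also have "1 - a / (1 + a) + a / (1 + a) * (t / a) = (1 + t) / (1 + a)"
    using assms by (simp add: field_simps)
  finally have "a / (1 + a) * (ln t - ln a) < ln (1 + t) - ln (1 + a)"
    using assms by (simp add: ln_div)
  then show ?thesis
    by (simp add: right_diff_distrib)
qed

lemma sum_ge_under_sum_ln_constraint:
  fixes \<phi> :: "'a \<Rightarrow> real \<Rightarrow> real" and \<rho> t :: "'a \<Rightarrow> real"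
  assumes "finite J" "0 \<le> c"
    and tangent: "\<And>j s. j \<in> J \<Longrightarrow> 0 < s \<Longrightarrow> s \<noteq> \<rho> j \<Longrightarrow> \<phi> j (\<rho> j) + c * ln (\<rho> j) < \<phi> j s + c * ln s"
    and t_pos: "\<And>j. j \<in> J \<Longrightarrow> 0 < t j"
    and budget: "(\<Sum>j\<in>J. ln (t j)) \<le> (\<Sum>j\<in>J. ln (\<rho> j))"
  shows "(\<Sum>j\<in>J. \<phi> j (\<rho> j)) \<le> (\<Sum>j\<in>J. \<phi> j (t j))"
    and "(\<Sum>j\<in>J. \<phi> j (t j)) \<le> (\<Sum>j\<in>J. \<phi> j (\<rho> j)) \<Longrightarrow> \<forall>j\<in>J. t j = \<rho> j"
proof -
  have pointwise: "\<forall>j\<in>J. \<phi> j (\<rho> j) + c * ln (\<rho> j) \<le> \<phi> j (t j) + c * ln (t j)"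
    using tangent t_pos by (metis order.refl order.strict_implies_order)
  have slack: "c * (\<Sum>j\<in>J. ln (t j)) \<le> c * (\<Sum>j\<in>J. ln (\<rho> j))"
    using budget \<open>0 \<le> c\<close> by (rule mult_left_mono)
  have "(\<Sum>j\<in>J. \<phi> j (\<rho> j)) + c * (\<Sum>j\<in>J. ln (\<rho> j)) \<le> (\<Sum>j\<in>J. \<phi> j (t j)) + c * (\<Sum>j\<in>J. ln (t j))"
    using sum_mono[OF pointwise[rule_format]] by (simp add: sum.distrib sum_distrib_left)
  with slack show "(\<Sum>j\<in>J. \<phi> j (\<rho> j)) \<le> (\<Sum>j\<in>J. \<phi> j (t j))"
    by linarith
  show "\<forall>j\<in>J. t j = \<rho> j" if "(\<Sum>j\<in>J. \<phi> j (t j)) \<le> (\<Sum>j\<in>J. \<phi> j (\<rho> j))"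
  proof (rule ccontr)
    assume "\<not> (\<forall>j\<in>J. t j = \<rho> j)"
    then have "\<exists>j\<in>J. \<phi> j (\<rho> j) + c * ln (\<rho> j) < \<phi> j (t j) + c * ln (t j)"
      using tangent t_pos by metis
    then have "(\<Sum>j\<in>J. \<phi> j (\<rho> j)) + c * (\<Sum>j\<in>J. ln (\<rho> j)) < (\<Sum>j\<in>J. \<phi> j (t j)) + c * (\<Sum>j\<in>J. ln (t j))"
      using sum_strict_mono_ex1[OF \<open>finite J\<close> pointwise] by (simp add: sum.distrib sum_distrib_left)
    with slack that show False
      by linarith
  qed
qed

lemma sum_ln_ratio_telescope:
  fixes r :: "int \<Rightarrow> real"
  assumes "\<And>i. -1 \<le> i \<Longrightarrow> i \<le> int k \<Longrightarrow> 0 < r i"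
  shows "(\<Sum>j\<le>k. ln (r (int j) / r (int j - 1))) = ln (r (int k)) - ln (r (-1))"
  using assms
proof (induction k)
  case 0
  have "0 < r 0" "0 < r (-1)"
    using "0.prems" by auto
  then show ?case
    by (simp add: ln_div)
next
  case (Suc k)
  have "0 < r (int k)" "0 < r (1 + int k)"
    using Suc.prems by auto
  then have "ln (r (int (Suc k)) / r (int (Suc k) - 1)) = ln (r (1 + int k)) - ln (r (int k))"
    by (simp add: ln_div)
  moreover have "(\<Sum>j\<le>k. ln (r (int j) / r (int j - 1))) = ln (r (int k)) - ln (r (-1))"
    using Suc by simp
  ultimately show ?case
    by simp
qed

lemma ex1_solution_strict_mono_on:
  fixes g :: "real \<Rightarrow> real"
  assumes mono: "strict_mono_on {a..} g" and cont: "continuous_on {a..} g"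
    and lim: "filterlim g at_top at_top" and "g a \<le> y"
  shows "\<exists>!x. a \<le> x \<and> g x = y"
proof -
  obtain b where "a \<le> b" "y \<le> g b"
    using eventually_conj[OF eventually_ge_at_top[of a]
        lim[unfolded filterlim_at_top, rule_format, of y]]
    by (auto simp: eventually_at_top_linorder)
  then obtain x where "a \<le> x" "g x = y"
    using IVT'[of g a y b] \<open>g a \<le> y\<close> continuous_on_subset[OF cont] by auto
  moreover have "x' = x" if "a \<le> x'" "g x' = y" for x'
    using strict_mono_on_eqD[OF mono, of x x'] that \<open>a \<le> x\<close> \<open>g x = y\<close> by auto
  ultimately show ?thesis
    by blast
qed

lemma powr_inverse_Suc_power:
  fixes \<gamma> :: real
  assumes "0 \<le> \<gamma>"
  shows "(\<gamma> powr (1 / real (Suc k))) ^ Suc k = \<gamma>"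
proof -
  have "root (Suc k) \<gamma> ^ Suc k = \<gamma>"
    using assms by (rule real_root_pow_pos2[OF zero_less_Suc])
  then show ?thesis
    using assms by (simp add: root_powr_inverse)
qed

lemma beta_of_pos: "1 < \<alpha> \<Longrightarrow> 0 < beta_of \<alpha>"
  by (simp add: beta_of_def)

lemma beta_of_less_1: "1 < \<alpha> \<Longrightarrow> beta_of \<alpha> < 1"
  by (simp add: beta_of_def)

lemma beta_of_nonneg: "1 \<le> \<alpha> \<Longrightarrow> 0 \<le> beta_of \<alpha>"
  by (simp add: beta_of_def)

lemma beta_of_strict_mono_on: "strict_mono_on {1..} beta_of"
  by (rule strict_mono_onI) (simp add: beta_of_def field_simps)

lemma beta_of_at_top: "(beta_of \<longlongrightarrow> 1) at_top"
  unfolding beta_of_def by real_asymp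

lemma f1_eq_beta_of: "1 \<le> \<alpha> \<Longrightarrow> f1 n m \<alpha> = \<alpha> ^ (m + 2) * beta_of \<alpha> ^ (n - m)"
  by (simp add: f1_def beta_of_def field_simps)

lemma f1_pos: "1 < \<alpha> \<Longrightarrow> 0 < f1 n m \<alpha>"
  by (simp add: f1_eq_beta_of beta_of_pos)

lemma f1_one_le_1: "f1 n m 1 \<le> 1"
  by (simp add: f1_eq_beta_of beta_of_def power_0_left)

lemma continuous_on_f1: "continuous_on {1..} (f1 n m)"
  unfolding f1_def by (intro continuous_intros) auto

(* h1 (n - m) alpha is the smallest product of optimal edge ratios over a run of consecutive
   edges containing a strict one, so the candidate minimiser is admissible once it exceeds 1. *)
definition h1 :: "nat \<Rightarrow> real \<Rightarrow> real" where
  "h1 k \<alpha> = \<alpha> * beta_of \<alpha> ^ k"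

lemma f1_eq_h1: "1 \<le> \<alpha> \<Longrightarrow> f1 n m \<alpha> = \<alpha> ^ (m + 1) * h1 (n - m) \<alpha>"
  by (simp add: f1_eq_beta_of h1_def)

lemma strict_mono_on_power_times_beta_of_power:
  "strict_mono_on {1..} (\<lambda>\<alpha>. \<alpha> ^ Suc j * beta_of \<alpha> ^ k)"
proof (rule strict_mono_onI)
  fix a b :: real
  assume "a \<in> {1..}" "b \<in> {1..}" "a < b"
  then have "1 \<le> a" "1 < b" by auto
  have "beta_of a ^ k \<le> beta_of b ^ k"
    using \<open>1 \<le> a\<close> \<open>a < b\<close> strict_mono_onD[OF beta_of_strict_mono_on, of a b]
    by (intro power_mono) (auto simp: beta_of_nonneg)
  then have "a ^ Suc j * beta_of a ^ k \<le> a ^ Suc j * beta_of b ^ k"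
    using \<open>1 \<le> a\<close> by (simp add: mult_left_mono)
  also have "\<dots> < b ^ Suc j * beta_of b ^ k"
    using \<open>1 \<le> a\<close> \<open>a < b\<close> \<open>1 < b\<close>
    by (intro mult_strict_right_mono power_strict_mono) (auto simp: beta_of_pos)
  finally show "a ^ Suc j * beta_of a ^ k < b ^ Suc j * beta_of b ^ k" .
qed

lemma filterlim_power_times_beta_of_power_at_top:
  "filterlim (\<lambda>\<alpha>. \<alpha> ^ Suc j * beta_of \<alpha> ^ k) at_top at_top"
proof (rule filterlim_at_top_mono)
  show "filterlim (\<lambda>\<alpha>::real. (1 / 2) ^ k * \<alpha>) at_top at_top"
    by (intro filterlim_tendsto_pos_mult_at_top[OF tendsto_const] filterlim_ident) simp
  have bound: "(1 / 2) ^ k * \<alpha> \<le> \<alpha> ^ Suc j * beta_of \<alpha> ^ k" if "5 \<le> \<alpha>" for \<alpha> :: real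
  proof -
    have "(1 / 2) ^ k \<le> beta_of \<alpha> ^ k"
      using that by (intro power_mono) (simp_all add: beta_of_def field_simps)
    moreover have "\<alpha> \<le> \<alpha> ^ Suc j"
      using that by (simp add: self_le_power)
    ultimately have "(1 / 2) ^ k * \<alpha> \<le> beta_of \<alpha> ^ k * \<alpha> ^ Suc j"
      using that by (intro mult_mono) (auto simp: beta_of_nonneg)
    then show ?thesis
      by (simp only: mult.commute)
  qed
  then show "\<forall>\<^sub>F \<alpha> in at_top. (1 / 2) ^ k * \<alpha> \<le> \<alpha> ^ Suc j * beta_of \<alpha> ^ k"
    unfolding eventually_at_top_linorder using bound by blast
qed

lemma f1_strict_mono_on: "strict_mono_on {1..} (f1 n m)"
  using strict_mono_on_power_times_beta_of_power[of "m + 1" "n - m"]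
  by (simp add: strict_mono_on_def f1_eq_beta_of)

lemma h1_strict_mono_on: "strict_mono_on {1..} (h1 k)"
  unfolding h1_def using strict_mono_on_power_times_beta_of_power[of 0 k] by simp

lemma f1_at_top: "filterlim (f1 n m) at_top at_top"
proof (rule filterlim_cong[THEN iffD1, OF refl refl _ filterlim_power_times_beta_of_power_at_top])
  show "\<forall>\<^sub>F \<alpha> in at_top. \<alpha> ^ Suc (m + 1) * beta_of \<alpha> ^ (n - m) = f1 n m \<alpha>"
    by (auto simp: eventually_at_top_linorder f1_eq_beta_of intro!: exI[of _ 1])
qed

lemma h1_at_top: "filterlim (h1 k) at_top at_top"
  unfolding h1_def using filterlim_power_times_beta_of_power_at_top[of 0 k] by simp

lemma f1_root_div_eq_h1:
  assumes "1 \<le> \<gamma>"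
  shows "f1 n m (\<gamma> powr (1 / real (m + 1))) / \<gamma> = h1 (n - m) (\<gamma> powr (1 / real (m + 1)))"
  using assms powr_inverse_Suc_power[of \<gamma> m] by (simp add: f1_eq_h1 ge_one_powr_ge_zero)

lemma f1_root_div_strict_mono_on:
  "strict_mono_on {1..} (\<lambda>\<gamma>. f1 n m (\<gamma> powr (1 / real (m + 1))) / \<gamma>)"
proof (rule strict_mono_onI)
  fix x y :: real
  assume "x \<in> {1..}" "y \<in> {1..}" "x < y"
  then have "h1 (n - m) (x powr (1 / real (m + 1))) < h1 (n - m) (y powr (1 / real (m + 1)))"
    by (intro strict_mono_onD[OF h1_strict_mono_on] powr_less_mono2)
      (auto simp: ge_one_powr_ge_zero)
  with \<open>x \<in> {1..}\<close> \<open>y \<in> {1..}\<close> show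
    "f1 n m (x powr (1 / real (m + 1))) / x < f1 n m (y powr (1 / real (m + 1))) / y"
    using f1_root_div_eq_h1[of x n m] f1_root_div_eq_h1[of y n m] by simp
qed

lemma f1_root_div_at_top:
  "filterlim (\<lambda>\<gamma>. f1 n m (\<gamma> powr (1 / real (m + 1))) / \<gamma>) at_top at_top"
proof (rule filterlim_cong[THEN iffD1, OF refl refl _
      filterlim_compose[OF h1_at_top real_powr_at_top]])
  show "\<forall>\<^sub>F \<gamma> in at_top.
      h1 (n - m) (\<gamma> powr (1 / real (m + 1))) = f1 n m (\<gamma> powr (1 / real (m + 1))) / \<gamma>"
    using eventually_ge_at_top[of "1 :: real"]
    by eventually_elim (rule f1_root_div_eq_h1[symmetric])
qed simp

lemma gamma0_ex1: "\<exists>!\<gamma>0. 1 \<le> \<gamma>0 \<and> f1 n m (\<gamma>0 powr (1 / real (m + 1))) = \<gamma>0"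
proof -
  have "x powr (1 / real (m + 1)) + 3 \<noteq> 0" for x :: real
    by (smt (verit) powr_ge_zero)
  then have "continuous_on {1..} (\<lambda>\<gamma>. f1 n m (\<gamma> powr (1 / real (m + 1))) / \<gamma>)"
    unfolding f1_def by (intro continuous_intros) auto
  then have "\<exists>!\<gamma>0. 1 \<le> \<gamma>0 \<and> f1 n m (\<gamma>0 powr (1 / real (m + 1))) / \<gamma>0 = 1"
    using f1_one_le_1
    by (intro ex1_solution_strict_mono_on f1_root_div_strict_mono_on f1_root_div_at_top) auto
  moreover have "f1 n m (\<gamma> powr (1 / real (m + 1))) / \<gamma> = 1
      \<longleftrightarrow> f1 n m (\<gamma> powr (1 / real (m + 1))) = \<gamma>"
    if "1 \<le> \<gamma>" for \<gamma> :: real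
    using that by (simp add: divide_eq_eq)
  ultimately show ?thesis
    by (metis (no_types, lifting))
qed

lemma alpha_ex1:
  assumes "1 < \<gamma>"
  shows "\<exists>!\<alpha>. 1 < \<alpha> \<and> f1 n m \<alpha> = \<gamma>"
proof -
  have "\<exists>!\<alpha>. 1 \<le> \<alpha> \<and> f1 n m \<alpha> = \<gamma>"
    using f1_one_le_1[of n m] assms
    by (intro ex1_solution_strict_mono_on f1_strict_mono_on continuous_on_f1 f1_at_top) auto
  moreover have "f1 n m 1 \<noteq> \<gamma>"
    using f1_one_le_1[of n m] assms by auto
  ultimately show ?thesis
    by (metis order.order_iff_strict)
qed

lemma alpha_gamma:
  assumes "1 < \<gamma>"
  shows "1 < alpha_gamma n m \<gamma>" and "f1 n m (alpha_gamma n m \<gamma>) = \<gamma>"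
  using theI'[OF alpha_ex1[OF assms]] by (auto simp: alpha_gamma_def)

lemma alpha_gamma_at_top: "filterlim (alpha_gamma n m) at_top at_top"
  unfolding filterlim_at_top
proof
  fix Z :: real
  define a where "a = max 1 Z"
  have bound: "Z \<le> alpha_gamma n m \<gamma>" if "max 2 (f1 n m a) \<le> \<gamma>" for \<gamma>
  proof (rule ccontr)
    assume "\<not> Z \<le> alpha_gamma n m \<gamma>"
    then have "f1 n m (alpha_gamma n m \<gamma>) < f1 n m a"
      using alpha_gamma(1)[of \<gamma> n m] that
      by (intro strict_mono_onD[OF f1_strict_mono_on]) (auto simp: a_def)
    with alpha_gamma(2)[of \<gamma>] that show False
      by auto
  qed
  then show "\<forall>\<^sub>F \<gamma> in at_top. Z \<le> alpha_gamma n m \<gamma>"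
    unfolding eventually_at_top_linorder by blast
qed

lemma beta_of_alpha_gamma_tendsto: "((\<lambda>\<gamma>. beta_of (alpha_gamma n m \<gamma>)) \<longlongrightarrow> 1) at_top"
  by (rule filterlim_compose[OF beta_of_at_top alpha_gamma_at_top])

lemma h1_alpha_gamma_gt_1:
  assumes "1 \<le> \<gamma>0" "f1 n m (\<gamma>0 powr (1 / real (m + 1))) = \<gamma>0" "\<gamma>0 < \<gamma>"
  shows "1 < h1 (n - m) (alpha_gamma n m \<gamma>)"
proof -
  define a0 where "a0 = \<gamma>0 powr (1 / real (m + 1))"
  have "1 \<le> a0"
    using assms(1) by (simp add: a0_def ge_one_powr_ge_zero)
  have "h1 (n - m) a0 = 1"
    using f1_root_div_eq_h1[OF assms(1), of n m] assms(1,2) by (simp add: a0_def)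
  have "f1 n m a0 < f1 n m (alpha_gamma n m \<gamma>)"
    using assms alpha_gamma(2)[of \<gamma> n m] by (simp add: a0_def)
  then have "a0 < alpha_gamma n m \<gamma>"
    using strict_mono_on_less[OF f1_strict_mono_on] \<open>1 \<le> a0\<close> alpha_gamma(1)[of \<gamma> n m] assms by auto
  then have "h1 (n - m) a0 < h1 (n - m) (alpha_gamma n m \<gamma>)"
    using \<open>1 \<le> a0\<close> by (intro strict_mono_onD[OF h1_strict_mono_on]) auto
  with \<open>h1 (n - m) a0 = 1\<close> show ?thesis
    by simp
qed

(* L_OP {x, x'} for u x <= u x', as a function of t = r x' / r x; tie means u x = u x'. *)
definition edge_loss :: "bool \<Rightarrow> real \<Rightarrow> real" where
  "edge_loss tie t = (if tie then ln (1 + t) - ln 2 - ln t / 2 else ln (1 + t) - ln t)"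

definition edge_ratio :: "real \<Rightarrow> bool \<Rightarrow> real" where
  "edge_ratio \<alpha> tie = (if tie then beta_of \<alpha> else \<alpha>)"

lemma edge_ratio_pos: "1 < \<alpha> \<Longrightarrow> 0 < edge_ratio \<alpha> tie"
  by (simp add: edge_ratio_def beta_of_pos)

lemma L_OP_eq_edge_loss:
  assumes "a \<le> b" "0 < p" "0 < q"
  shows "L_OP a b p q = edge_loss (a = b) (q / p)"
proof (cases "a = b")
  case True
  have "L_OP b b p q = 1 / 2 * ln ((p + q) / (2 * p)) + 1 / 2 * ln ((p + q) / (2 * q))"
    by (simp add: L_OP_def kl2_def model_prob_def label_prob_def ind_def add.commute)
  also have "\<dots> = edge_loss True (q / p)"
    using assms by (simp add: edge_loss_def ln_div ln_mult field_simps)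
  finally show ?thesis
    using True by simp
next
  case False
  then have "label_prob a b = 0" "label_prob b a = 1"
    using assms(1) by (simp_all add: label_prob_def ind_def)
  with False assms show ?thesis
    by (simp add: L_OP_def kl2_def model_prob_def edge_loss_def ln_div add.commute field_simps)
qed

lemma edge_loss_tangent_less:
  assumes "1 < \<alpha>" "0 < t" "t \<noteq> edge_ratio \<alpha> tie"
  shows "edge_loss tie (edge_ratio \<alpha> tie) + ln (edge_ratio \<alpha> tie) / (1 + \<alpha>)
    < edge_loss tie t + ln t / (1 + \<alpha>)"
proof (cases tie)
  case True
  define \<beta> where "\<beta> = beta_of \<alpha>"
  have "1 / 2 - 1 / (1 + \<alpha>) = \<beta> / (1 + \<beta>)"
    using assms(1) by (simp add: \<beta>_def beta_of_def divide_simps)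
  then have "edge_loss True x + ln x / (1 + \<alpha>) = ln (1 + x) - \<beta> / (1 + \<beta>) * ln x - ln 2" for x
    by (simp add: edge_loss_def algebra_simps flip: \<open>1 / 2 - 1 / (1 + \<alpha>) = \<beta> / (1 + \<beta>)\<close>)
  moreover have "ln (1 + \<beta>) - \<beta> / (1 + \<beta>) * ln \<beta> < ln (1 + t) - \<beta> / (1 + \<beta>) * ln t"
    using assms True
    by (intro ln_one_plus_tangent_less) (auto simp: \<beta>_def edge_ratio_def beta_of_pos)
  ultimately show ?thesis
    using True by (simp add: edge_ratio_def \<beta>_def)
next
  case False
  have "edge_loss False x + ln x / (1 + \<alpha>) = ln (1 + x) - \<alpha> / (1 + \<alpha>) * ln x" for x
    using assms(1) by (simp add: edge_loss_def field_simps)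
  moreover have "ln (1 + \<alpha>) - \<alpha> / (1 + \<alpha>) * ln \<alpha> < ln (1 + t) - \<alpha> / (1 + \<alpha>) * ln t"
    using assms False by (intro ln_one_plus_tangent_less) (auto simp: edge_ratio_def)
  ultimately show ?thesis
    using False by (simp add: edge_ratio_def)
qed

lemma admissible_pos:
  assumes "admissible \<gamma> n r" "0 < \<gamma>" "-1 \<le> i" "i \<le> int n + 1"
  shows "0 < r i"
proof -
  have "1 / \<gamma> \<le> r i"
    using assms unfolding admissible_def by auto
  with \<open>0 < \<gamma>\<close> show ?thesis
    by (smt (verit) divide_pos_pos)
qed

lemma admissible_sum_ln_ratio:
  assumes r: "admissible \<gamma> n r" and "0 < \<gamma>"
  shows "(\<Sum>j\<le>n + 1. ln (r (int j) / r (int j - 1))) \<le> ln \<gamma>"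
    and "(\<Sum>j\<le>n + 1. ln (r (int j) / r (int j - 1))) = ln \<gamma> \<Longrightarrow> r (-1) = 1 / \<gamma>"
proof -
  have pos: "0 < r i" if "-1 \<le> i" "i \<le> int n + 1" for i
    using admissible_pos[OF r \<open>0 < \<gamma>\<close> that] .
  have telescope: "(\<Sum>j\<le>n + 1. ln (r (int j) / r (int j - 1))) = ln (r (int n + 1)) - ln (r (-1))"
    using sum_ln_ratio_telescope[of "n + 1" r] pos by (simp add: add.commute)
  have "r (int n + 1) \<le> 1" "1 / \<gamma> \<le> r (-1)"
    using r by (auto simp: admissible_def)
  then have top: "ln (r (int n + 1)) \<le> 0" and "ln (1 / \<gamma>) \<le> ln (r (-1))"
    using pos[of "int n + 1"] pos[of "-1"] \<open>0 < \<gamma>\<close> by auto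
  then have bottom: "- ln \<gamma> \<le> ln (r (-1))"
    using \<open>0 < \<gamma>\<close> by (simp add: ln_div)
  show "(\<Sum>j\<le>n + 1. ln (r (int j) / r (int j - 1))) \<le> ln \<gamma>"
    using telescope top bottom by linarith
  assume "(\<Sum>j\<le>n + 1. ln (r (int j) / r (int j - 1))) = ln \<gamma>"
  then have "ln (r (-1)) = ln (1 / \<gamma>)"
    using telescope top bottom \<open>0 < \<gamma>\<close> by (simp add: ln_div)
  then show "r (-1) = 1 / \<gamma>"
    using pos[of "-1"] \<open>0 < \<gamma>\<close> by simp
qed

lemma admissible_mono:
  assumes "admissible \<gamma> n r" "0 < \<gamma>" "\<gamma> \<le> \<gamma>'"
  shows "admissible \<gamma>' n r"
proof -
  have "1 / \<gamma>' \<le> 1 / \<gamma>"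
    using assms by (intro divide_left_mono) auto
  with assms(1) show ?thesis
    unfolding admissible_def by force
qed

lemma Lmin_eq_L_OPN: "is_minimizer \<gamma> n u r \<Longrightarrow> Lmin \<gamma> n u = L_OPN n u r"
  unfolding Lmin_def is_minimizer_def by (intro cInf_eq_minimum) auto

lemma Lmin_strict_antimono_on:
  assumes "S \<subseteq> {0<..}"
    and ex: "\<And>\<gamma>. \<gamma> \<in> S \<Longrightarrow> \<exists>r. is_minimizer \<gamma> n u r"
    and bottom: "\<And>\<gamma> r. \<gamma> \<in> S \<Longrightarrow> is_minimizer \<gamma> n u r \<Longrightarrow> r (-1) = 1 / \<gamma>"
  shows "strict_antimono_on S (\<lambda>\<gamma>. Lmin \<gamma> n u)"
proof (rule monotone_onI)
  fix \<gamma> \<gamma>' assume "\<gamma> \<in> S" "\<gamma>' \<in> S" "\<gamma> < \<gamma>'"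
  obtain r where r: "is_minimizer \<gamma> n u r"
    using ex[OF \<open>\<gamma> \<in> S\<close>] by blast
  obtain r' where r': "is_minimizer \<gamma>' n u r'"
    using ex[OF \<open>\<gamma>' \<in> S\<close>] by blast
  have "0 < \<gamma>"
    using \<open>\<gamma> \<in> S\<close> assms(1) by auto
  have adm: "admissible \<gamma>' n r"
    using admissible_mono[of \<gamma> n r \<gamma>'] r \<open>0 < \<gamma>\<close> \<open>\<gamma> < \<gamma>'\<close> by (simp add: is_minimizer_def)
  have "\<not> is_minimizer \<gamma>' n u r"
    using bottom[OF \<open>\<gamma> \<in> S\<close> r] bottom[OF \<open>\<gamma>' \<in> S\<close>, of r] \<open>0 < \<gamma>\<close> \<open>\<gamma> < \<gamma>'\<close> by auto
  then have "L_OPN n u r' < L_OPN n u r"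
    using r' adm unfolding is_minimizer_def by fastforce
  then show "Lmin \<gamma>' n u < Lmin \<gamma> n u"
    using Lmin_eq_L_OPN[OF r] Lmin_eq_L_OPN[OF r'] by simp
qed

lemma card_I1_le: "card (I1 n u) \<le> n"
  using card_mono[of "{..<n}" "I1 n u"] by (auto simp: I1_def)

locale sorted_objective =
  fixes n :: nat and u :: "nat \<Rightarrow> real"
  assumes sorted: "\<And>i. i < n \<Longrightarrow> u i \<le> u (Suc i)"
begin

(* Edge j, for 0 <= j <= n + 1, joins x_(j-1) and x_j; it is a tie iff u x_(j-1) = u x_j. *)
definition tie_edges :: "nat set" where
  "tie_edges = Suc ` I2 n u"

lemma tie_edges_subset: "tie_edges \<subseteq> {1..n}"
  by (auto simp: tie_edges_def I2_def)

lemma card_tie_edges: "card tie_edges = n - card (I1 n u)"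
proof -
  have "u i < u (Suc i) \<or> u i = u (Suc i)" if "i < n" for i
    using sorted[OF that] by auto
  then have "I1 n u \<union> I2 n u = {..<n}"
    by (auto simp: I1_def I2_def)
  moreover have "card (I1 n u \<union> I2 n u) = card (I1 n u) + card (I2 n u)"
    by (rule card_Un_disjoint) (auto simp: I1_def I2_def)
  ultimately show ?thesis
    by (simp add: tie_edges_def card_image)
qed

lemma Uext_edge:
  assumes "j \<le> n + 1"
  shows "Uext n u (int j - 1) \<le> Uext n u (int j)
    \<and> (Uext n u (int j - 1) = Uext n u (int j) \<longleftrightarrow> j \<in> tie_edges)"
proof -
  consider "j = 0" | "j = n + 1" | i where "j = Suc i" "i < n"
    using assms by (cases j) (auto simp: le_less)
  then show ?thesis
  proof cases
    case (3 i)
    moreover have "nat (1 + int i) = Suc i"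
      by simp
    ultimately show ?thesis
      using sorted[of i] by (auto simp: Uext_def tie_edges_def I2_def)
  qed (auto simp: Uext_def tie_edges_def I2_def)
qed

lemma L_OPN_eq_sum_edge_loss:
  assumes "\<And>i. -1 \<le> i \<Longrightarrow> i \<le> int n + 1 \<Longrightarrow> 0 < r i"
  shows "L_OPN n u r = (\<Sum>j\<le>n + 1. edge_loss (j \<in> tie_edges) (r (int j) / r (int j - 1)))"
proof -
  have "L_OPN n u r
      = (\<Sum>j\<le>n + 1. L_OP (Uext n u (int j - 1)) (Uext n u (int j)) (r (int j - 1)) (r (int j)))"
    unfolding L_OPN_def
    by (rule sum.reindex_bij_witness[of _ int nat]) auto
  also have "\<dots> = (\<Sum>j\<le>n + 1. edge_loss (j \<in> tie_edges) (r (int j) / r (int j - 1)))"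
    using assms by (intro sum.cong refl) (simp add: L_OP_eq_edge_loss Uext_edge)
  finally show ?thesis .
qed

definition opt_ratio :: "real \<Rightarrow> nat \<Rightarrow> real" where
  "opt_ratio \<alpha> j = edge_ratio \<alpha> (j \<in> tie_edges)"

lemma opt_ratio_pos: "1 < \<alpha> \<Longrightarrow> 0 < opt_ratio \<alpha> j"
  by (simp add: opt_ratio_def edge_ratio_pos)

definition opt_r :: "real \<Rightarrow> int \<Rightarrow> real" where
  "opt_r \<alpha> i = (\<Prod>j<nat (i + 1). opt_ratio \<alpha> j) / f1 n (card (I1 n u)) \<alpha>"

lemma prod_opt_ratio:
  "finite A \<Longrightarrow> (\<Prod>j\<in>A. opt_ratio \<alpha> j) = beta_of \<alpha> ^ card (A \<inter> tie_edges) * \<alpha> ^ card (A - tie_edges)"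
  unfolding opt_ratio_def edge_ratio_def by (simp add: prod.If_cases Diff_eq)

lemma prod_opt_ratio_atMost:
  assumes "1 \<le> \<alpha>"
  shows "(\<Prod>j\<le>n + 1. opt_ratio \<alpha> j) = f1 n (card (I1 n u)) \<alpha>"
proof -
  have "tie_edges \<subseteq> {..n + 1}" "finite tie_edges"
    using tie_edges_subset finite_subset by auto
  then have "card ({..n + 1} \<inter> tie_edges) = n - card (I1 n u)"
    and "card ({..n + 1} - tie_edges) = card (I1 n u) + 2"
    using card_tie_edges card_I1_le[of n u] by (simp_all add: Int_absorb1 card_Diff_subset)
  then show ?thesis
    unfolding prod_opt_ratio[OF finite_atMost] f1_eq_beta_of[OF assms] by (simp add: mult.commute)
qed

lemma h1_le_prod_opt_ratio:
  assumes "1 < \<alpha>" "A \<subseteq> {..n + 1}" "A - tie_edges \<noteq> {}"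
  shows "h1 (n - card (I1 n u)) \<alpha> \<le> (\<Prod>j\<in>A. opt_ratio \<alpha> j)"
proof -
  have "finite A"
    using assms(2) finite_subset by blast
  have "card (A \<inter> tie_edges) \<le> n - card (I1 n u)"
    using card_mono[of tie_edges "A \<inter> tie_edges"] tie_edges_subset card_tie_edges
    by (auto simp: finite_subset)
  then have "beta_of \<alpha> ^ (n - card (I1 n u)) \<le> beta_of \<alpha> ^ card (A \<inter> tie_edges)"
    using assms(1) by (intro power_decreasing) (auto simp: beta_of_pos beta_of_less_1 less_imp_le)
  moreover have "\<alpha> \<le> \<alpha> ^ card (A - tie_edges)"
    using assms \<open>finite A\<close> by (intro self_le_power) (auto simp: card_gt_0_iff)
  ultimately have "beta_of \<alpha> ^ (n - card (I1 n u)) * \<alpha>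
      \<le> beta_of \<alpha> ^ card (A \<inter> tie_edges) * \<alpha> ^ card (A - tie_edges)"
    using assms(1) by (intro mult_mono) (auto simp: beta_of_pos less_imp_le)
  then show ?thesis
    using \<open>finite A\<close> by (simp add: prod_opt_ratio h1_def mult.commute)
qed

lemma opt_r_step: "opt_r \<alpha> (int j) = opt_ratio \<alpha> j * opt_r \<alpha> (int j - 1)"
proof -
  have "nat (int j + 1) = Suc j" "nat (int j - 1 + 1) = j"
    by auto
  then show ?thesis
    by (simp add: opt_r_def prod.lessThan_Suc)
qed

lemma admissible_opt_r:
  assumes "1 < \<alpha>" "1 < h1 (n - card (I1 n u)) \<alpha>"
  shows "admissible (f1 n (card (I1 n u)) \<alpha>) n (opt_r \<alpha>)"
  unfolding admissible_def
proof
  fix i assume "i \<in> {-1..int n + 1}"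
  define K where "K = nat (i + 1)"
  have "K \<le> n + 2"
    using \<open>i \<in> {-1..int n + 1}\<close> by (auto simp: K_def)
  have one_le: "1 \<le> (\<Prod>j\<in>A. opt_ratio \<alpha> j)"
    if "A \<subseteq> {..n + 1}" "A = {} \<or> 0 \<in> A \<or> n + 1 \<in> A" for A
  proof (cases "A = {}")
    case False
    then have "A - tie_edges \<noteq> {}"
      using that(2) tie_edges_subset by auto
    then show ?thesis
      using h1_le_prod_opt_ratio[OF assms(1) that(1)] assms(2) by linarith
  qed simp
  define P where "P = (\<Prod>j<K. opt_ratio \<alpha> j)"
  define Q where "Q = (\<Prod>j\<in>{K..n + 1}. opt_ratio \<alpha> j)"
  have "1 \<le> P"
    unfolding P_def using \<open>K \<le> n + 2\<close> by (intro one_le) auto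
  moreover have "1 \<le> Q"
    unfolding Q_def using \<open>K \<le> n + 2\<close> by (intro one_le) auto
  moreover have "P * Q = f1 n (card (I1 n u)) \<alpha>"
  proof -
    have "P * Q = (\<Prod>j\<in>{..<K} \<union> {K..n + 1}. opt_ratio \<alpha> j)"
      unfolding P_def Q_def by (rule prod.union_disjoint[symmetric]) auto
    also have "{..<K} \<union> {K..n + 1} = {..n + 1}"
      using \<open>K \<le> n + 2\<close> by auto
    also have "(\<Prod>j\<le>n + 1. opt_ratio \<alpha> j) = f1 n (card (I1 n u)) \<alpha>"
      using assms(1) by (intro prod_opt_ratio_atMost) auto
    finally show ?thesis .
  qed
  ultimately have "1 \<le> P" "P \<le> f1 n (card (I1 n u)) \<alpha>"
    by (auto simp: mult_le_cancel_left1 simp flip: \<open>P * Q = f1 n (card (I1 n u)) \<alpha>\<close>)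
  then show "opt_r \<alpha> i \<in> {1 / f1 n (card (I1 n u)) \<alpha>..1}"
    unfolding opt_r_def K_def[symmetric] P_def[symmetric] by (simp add: divide_right_mono)
qed

lemma sum_ln_opt_ratio:
  assumes "1 < \<alpha>"
  shows "(\<Sum>j\<le>n + 1. ln (opt_ratio \<alpha> j)) = ln (f1 n (card (I1 n u)) \<alpha>)"
proof -
  have "(\<Sum>j\<le>n + 1. ln (opt_ratio \<alpha> j)) = ln (\<Prod>j\<le>n + 1. opt_ratio \<alpha> j)"
    using assms by (intro ln_prod[symmetric]) (auto simp: opt_ratio_pos less_imp_neq[symmetric])
  also have "(\<Prod>j\<le>n + 1. opt_ratio \<alpha> j) = f1 n (card (I1 n u)) \<alpha>"
    using assms by (intro prod_opt_ratio_atMost) auto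
  finally show ?thesis .
qed

lemma L_OPN_opt_r:
  assumes "1 < \<alpha>"
  shows "L_OPN n u (opt_r \<alpha>) = (\<Sum>j\<le>n + 1. edge_loss (j \<in> tie_edges) (opt_ratio \<alpha> j))"
proof -
  have pos: "0 < opt_r \<alpha> i" for i
    using assms by (simp add: opt_r_def prod_pos opt_ratio_pos f1_pos)
  then have "opt_r \<alpha> (int j) / opt_r \<alpha> (int j - 1) = opt_ratio \<alpha> j" for j
    by (simp add: opt_r_step[of \<alpha> j] less_imp_neq[symmetric])
  with pos show ?thesis
    by (simp add: L_OPN_eq_sum_edge_loss)
qed

lemma L_OPN_opt_r_le:
  assumes \<alpha>: "1 < \<alpha>" and r: "admissible (f1 n (card (I1 n u)) \<alpha>) n r"
  shows "L_OPN n u (opt_r \<alpha>) \<le> L_OPN n u r"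
    and "L_OPN n u r \<le> L_OPN n u (opt_r \<alpha>) \<Longrightarrow>
      r (-1) = 1 / f1 n (card (I1 n u)) \<alpha> \<and> (\<forall>j\<le>n + 1. r (int j) = opt_ratio \<alpha> j * r (int j - 1))"
proof -
  define \<gamma> where "\<gamma> = f1 n (card (I1 n u)) \<alpha>"
  have "0 < \<gamma>"
    using \<alpha> by (simp add: \<gamma>_def f1_pos)
  note r = r[folded \<gamma>_def]
  have pos: "0 < r i" if "-1 \<le> i" "i \<le> int n + 1" for i
    using admissible_pos[OF r \<open>0 < \<gamma>\<close> that] .
  define t where "t j = r (int j) / r (int j - 1)" for j
  have t_pos: "0 < t j" if "j \<le> n + 1" for j
    using that pos by (simp add: t_def)
  have budget: "(\<Sum>j\<le>n + 1. ln (t j)) \<le> (\<Sum>j\<le>n + 1. ln (opt_ratio \<alpha> j))"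
    unfolding t_def sum_ln_opt_ratio[OF \<alpha>] \<gamma>_def[symmetric]
    by (rule admissible_sum_ln_ratio(1)[OF r \<open>0 < \<gamma>\<close>])
  have tangent: "edge_loss (j \<in> tie_edges) (opt_ratio \<alpha> j) + 1 / (1 + \<alpha>) * ln (opt_ratio \<alpha> j)
      < edge_loss (j \<in> tie_edges) s + 1 / (1 + \<alpha>) * ln s"
    if "0 < s" "s \<noteq> opt_ratio \<alpha> j" for j s
    using edge_loss_tangent_less[OF \<alpha> that[unfolded opt_ratio_def]] by (simp add: opt_ratio_def)
  note compare = sum_ge_under_sum_ln_constraint[OF finite_atMost _ tangent t_pos budget]
  have L_r: "L_OPN n u r = (\<Sum>j\<le>n + 1. edge_loss (j \<in> tie_edges) (t j))"
    using pos by (simp add: L_OPN_eq_sum_edge_loss t_def)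
  show "L_OPN n u (opt_r \<alpha>) \<le> L_OPN n u r"
    unfolding L_r L_OPN_opt_r[OF \<alpha>] by (rule compare(1)) (use \<alpha> in auto)
  assume "L_OPN n u r \<le> L_OPN n u (opt_r \<alpha>)"
  then have t_eq: "\<forall>j\<le>n + 1. t j = opt_ratio \<alpha> j"
    unfolding L_r L_OPN_opt_r[OF \<alpha>] using compare(2) \<alpha> by auto
  have "\<forall>j\<le>n + 1. r (int j) = opt_ratio \<alpha> j * r (int j - 1)"
  proof (intro allI impI)
    fix j assume "j \<le> n + 1"
    then have "0 < r (int j - 1)" "r (int j) / r (int j - 1) = opt_ratio \<alpha> j"
      using pos t_eq by (auto simp: t_def)
    then show "r (int j) = opt_ratio \<alpha> j * r (int j - 1)"
      by (simp add: divide_eq_eq)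
  qed
  moreover have "(\<Sum>j\<le>n + 1. ln (t j)) = ln \<gamma>"
    using t_eq sum_ln_opt_ratio[OF \<alpha>] by (simp add: \<gamma>_def)
  then have "r (-1) = 1 / \<gamma>"
    unfolding t_def by (rule admissible_sum_ln_ratio(2)[OF r \<open>0 < \<gamma>\<close>])
  ultimately show "r (-1) = 1 / \<gamma> \<and> (\<forall>j\<le>n + 1. r (int j) = opt_ratio \<alpha> j * r (int j - 1))"
    by blast
qed

lemma is_minimizer_opt_r:
  assumes "1 < \<alpha>" "1 < h1 (n - card (I1 n u)) \<alpha>"
  shows "is_minimizer (f1 n (card (I1 n u)) \<alpha>) n u (opt_r \<alpha>)"
  using assms admissible_opt_r L_OPN_opt_r_le(1)[OF assms(1)] by (auto simp: is_minimizer_def)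

lemma is_minimizer_values:
  assumes \<alpha>: "1 < \<alpha>" "1 < h1 (n - card (I1 n u)) \<alpha>"
    and r: "is_minimizer (f1 n (card (I1 n u)) \<alpha>) n u r"
  shows "r (-1) = 1 / f1 n (card (I1 n u)) \<alpha>"
    and "r 0 = \<alpha> / f1 n (card (I1 n u)) \<alpha>"
    and "i \<in> I1 n u \<Longrightarrow> r (int i + 1) = \<alpha> * r (int i)"
    and "i \<in> I2 n u \<Longrightarrow> r (int i + 1) = beta_of \<alpha> * r (int i)"
proof -
  have "L_OPN n u r \<le> L_OPN n u (opt_r \<alpha>)"
    using r admissible_opt_r[OF \<alpha>] by (simp add: is_minimizer_def)
  then have bottom: "r (-1) = 1 / f1 n (card (I1 n u)) \<alpha>"
    and step: "\<And>j. j \<le> n + 1 \<Longrightarrow> r (int j) = opt_ratio \<alpha> j * r (int j - 1)"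
    using L_OPN_opt_r_le(2)[OF \<alpha>(1)] r by (auto simp: is_minimizer_def)
  show "r (-1) = 1 / f1 n (card (I1 n u)) \<alpha>"
    by (rule bottom)
  show "r 0 = \<alpha> / f1 n (card (I1 n u)) \<alpha>"
    using step[of 0] bottom tie_edges_subset by (auto simp: opt_ratio_def edge_ratio_def)
  show "r (int i + 1) = \<alpha> * r (int i)" if "i \<in> I1 n u"
    using step[of "Suc i"] that
    by (auto simp: opt_ratio_def edge_ratio_def tie_edges_def I1_def I2_def add.commute)
  show "r (int i + 1) = beta_of \<alpha> * r (int i)" if "i \<in> I2 n u"
    using step[of "Suc i"] that
    by (auto simp: opt_ratio_def edge_ratio_def tie_edges_def I2_def add.commute)
qed

lemma minimizers_beyond_gamma0:
  assumes "1 \<le> \<gamma>0" "f1 n (card (I1 n u)) (\<gamma>0 powr (1 / real (card (I1 n u) + 1))) = \<gamma>0" "\<gamma>0 < \<gamma>"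
  defines "\<alpha> \<equiv> alpha_gamma n (card (I1 n u)) \<gamma>"
  shows "is_minimizer \<gamma> n u (opt_r \<alpha>)"
    and "is_minimizer \<gamma> n u r \<Longrightarrow> r (-1) = 1 / \<gamma> \<and> r 0 = \<alpha> / \<gamma>
      \<and> (\<forall>i\<in>I1 n u. r (int i + 1) = \<alpha> * r (int i))
      \<and> (\<forall>i\<in>I2 n u. r (int i + 1) = beta_of \<alpha> * r (int i))"
proof -
  have "1 < \<alpha>" "f1 n (card (I1 n u)) \<alpha> = \<gamma>"
    using alpha_gamma[of \<gamma>] assms(1,3) by (auto simp: \<alpha>_def)
  moreover have "1 < h1 (n - card (I1 n u)) \<alpha>"
    unfolding \<alpha>_def using assms(1-3) by (rule h1_alpha_gamma_gt_1)
  ultimately show "is_minimizer \<gamma> n u (opt_r \<alpha>)"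
    and "is_minimizer \<gamma> n u r \<Longrightarrow> r (-1) = 1 / \<gamma> \<and> r 0 = \<alpha> / \<gamma>
      \<and> (\<forall>i\<in>I1 n u. r (int i + 1) = \<alpha> * r (int i))
      \<and> (\<forall>i\<in>I2 n u. r (int i + 1) = beta_of \<alpha> * r (int i))"
    using is_minimizer_opt_r is_minimizer_values by metis+
qed

end

theorem proposition5:
  fixes n :: nat and u :: "nat \<Rightarrow> real"
  assumes mono_u: "\<And>i j. i < j \<Longrightarrow> j \<le> n \<Longrightarrow> u i \<le> u j"
  defines "m \<equiv> card (I1 n u)"
  shows "strict_mono_on {1..} (f1 n m) \<and> filterlim (f1 n m) at_top at_top
    \<and> strict_mono_on {1..} (\<lambda>\<gamma>. f1 n m (\<gamma> powr (1 / real (m + 1))) / \<gamma>)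
    \<and> filterlim (\<lambda>\<gamma>. f1 n m (\<gamma> powr (1 / real (m + 1))) / \<gamma>) at_top at_top
    \<and> (\<exists>!\<gamma>0. \<gamma>0 \<ge> 1 \<and> f1 n m (\<gamma>0 powr (1 / real (m + 1))) = \<gamma>0)
    \<and> (\<forall>\<gamma>0. \<gamma>0 \<ge> 1 \<and> f1 n m (\<gamma>0 powr (1 / real (m + 1))) = \<gamma>0 \<longrightarrow>
         (\<forall>\<gamma>>\<gamma>0. (\<exists>!\<alpha>. \<alpha> > 1 \<and> f1 n m \<alpha> = \<gamma>)
            \<and> (\<exists>r. is_minimizer \<gamma> n u r)
            \<and> (\<forall>r. is_minimizer \<gamma> n u r \<longrightarrow>
                 r 0 = alpha_gamma n m \<gamma> / \<gamma>
               \<and> (\<forall>i\<in>I1 n u. r (int i + 1) = alpha_gamma n m \<gamma> * r (int i))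
               \<and> (\<forall>i\<in>I2 n u. r (int i + 1) = beta_of (alpha_gamma n m \<gamma>) * r (int i))))
       \<and> strict_antimono_on {\<gamma>0<..} (\<lambda>\<gamma>. Lmin \<gamma> n u))
    \<and> filterlim (alpha_gamma n m) at_top at_top
    \<and> ((\<lambda>\<gamma>. beta_of (alpha_gamma n m \<gamma>)) \<longlongrightarrow> 1) at_top"
proof -
  interpret sorted_objective n u
    using mono_u by unfold_locales simp
  note minimizers = minimizers_beyond_gamma0[folded m_def]
  have antimono: "strict_antimono_on {\<gamma>0<..} (\<lambda>\<gamma>. Lmin \<gamma> n u)"
    if "1 \<le> \<gamma>0" "f1 n m (\<gamma>0 powr (1 / real (m + 1))) = \<gamma>0" for \<gamma>0
    using that minimizers[OF that] by (intro Lmin_strict_antimono_on) auto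
  have alpha: "\<exists>!\<alpha>. 1 < \<alpha> \<and> f1 n m \<alpha> = \<gamma>" if "1 \<le> \<gamma>0" "\<gamma>0 < \<gamma>" for \<gamma>0 \<gamma>
    using that by (intro alpha_ex1) auto
  show ?thesis
    by (intro conjI allI impI f1_strict_mono_on f1_at_top f1_root_div_strict_mono_on
        f1_root_div_at_top gamma0_ex1 alpha_gamma_at_top beta_of_alpha_gamma_tendsto)
      (use minimizers antimono alpha in blast)+
qed

end
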